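(* Let $$D_{10}=\begin{bmatrix} 1 & 1 & 1 & 1 & 1 & 1 & 1 & 1 & 1 & 1 \\ 1 & -1 & -\mathrm{i} & -\mathrm{i} & -\mathrm{i} & -\mathrm{i} & \mathrm{i} & \mathrm{i} & \mathrm{i} & \mathrm{i} \\ 1 & -\mathrm{i} & -1 & \mathrm{i} & \mathrm{i} & -\mathrm{i} & -\mathrm{i} & -\mathrm{i} & \mathrm{i} & \mathrm{i} \\ 1 & -\mathrm{i} & \mathrm{i} & -1 & -\mathrm{i} & \mathrm{i} & -\mathrm{i} & \mathrm{i} & -\mathrm{i} & \mathrm{i} \\ 1 & -\mathrm{i} & \mathrm{i} & -\mathrm{i} & -1 & \mathrm{i} & \mathrm{i} & -\mathrm{i} & \mathrm{i} & -\mathrm{i} \\ 1 & -\mathrm{i} & -\mathrm{i} & \mathrm{i} & \mathrm{i} & -1 & \mathrm{i} & \mathrm{i} & -\mathrm{i} & -\mathrm{i} \\ 1 & \mathrm{i} & -\mathrm{i} & -\mathrm{i} & \mathrm{i} & \mathrm{i} & -1 & -\mathrm{i} & -\mathrm{i} & \mathrm{i} \\ 1 & \mathrm{i} & -\mathrm{i} & \mathrm{i} & -\mathrm{i} & \mathrm{i} & -\mathrm{i} & -1 & \mathrm{i} & -\mathrm{i} \\ 1 & \mathrm{i} & \mathrm{i} & -\mathrm{i} & \mathrm{i} & -\mathrm{i} & -\mathrm{i} & \mathrm{i} & -1 & -\mathrm{i} \\ 1 & \mathrm{i} & \mathrm{i} & \mathrm{i} & -\mathrm{i} & -\mathrm{i}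 & \mathrm{i} & -\mathrm{i} & -\mathrm{i} & -1 \end{bmatrix}.$$ Define real $10\times10$ matrices $V_4,V_{15},V_{16}$ (rows and columns indexed $1,\ldots,10$), all of whose entries are $0$ except: $V_4$ has entry $+1$ at positions $(2,5),(2,9),(4,7),(4,8),(6,5),(6,9),(10,7),(10,8)$ and entry $-1$ at positions $(5,2),(5,6),(7,4),(7,10),(8,4),(8,10),(9,2),(9,6)$; $V_{15}$ has entry $+1$ at positions $(4,2),(4,6),(5,2),(5,6),(9,2),(9,6),(10,2),(10,6)$ and entry $-1$ at positions $(2,4),(2,5),(2,9),(2,10),(6,4),(6,5),(6,9),(6,10)$; $V_{16}$ has entry $+1$ at positions $(4,2),(4,6),(7,5),(7,9),(8,5),(8,9),(10,2),(10,6)$ and entry $-1$ at positions $(2,4),(2,10),(5,7),(5,8),(6,4),(6,10),(9,7),(9,8)$. Then for all $a,b,c\in\mathbb{R}$, the matrix $D_{10}\circ\mathrm{EXP}\big(\mathrm{i}(aV_4+bV_{15}+cV_{16})\big)$ is a dephased complex Hadamard matrix.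
   Context: $\circ$ denotes the entrywise (Hadamard) product and $[\mathrm{EXP}(\mathrm{i}R)]_{j,k}=e^{\mathrm{i}[R]_{j,k}}$ for a real matrix $R$. A dephased complex Hadamard matrix of order $d$ is a $d\times d$ matrix with unimodular entries, first row and first column all equal to $1$, and $HH^*=dI_d$, where $^*$ is conjugate transpose. *)

theory Defs
  imports Complex_Main
begin

text \<open>Square matrices of order d are represented as functions nat => nat => 'a,
  with rows and columns indexed by 1..d (entries outside this range are irrelevant).\<close>

definition dephased_complex_hadamard :: "nat \<Rightarrow> (nat \<Rightarrow> nat \<Rightarrow> complex) \<Rightarrow> bool" where
  "dephased_complex_hadamard d H \<longleftrightarrow>
     (\<forall>j\<in>{1..d}. \<forall>k\<in>{1..d}. cmod (H j k) = 1) \<and>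
     (\<forall>k\<in>{1..d}. H 1 k = 1) \<and>
     (\<forall>j\<in>{1..d}. H j 1 = 1) \<and>
     (\<forall>j\<in>{1..d}. \<forall>k\<in>{1..d}.
        (\<Sum>l=1..d. H j l * cnj (H k l)) = (if j = k then of_nat d else 0))"

definition hadamard_prod :: "(nat \<Rightarrow> nat \<Rightarrow> complex) \<Rightarrow> (nat \<Rightarrow> nat \<Rightarrow> complex) \<Rightarrow> nat \<Rightarrow> nat \<Rightarrow> complex" where
  "hadamard_prod A B = (\<lambda>j k. A j k * B j k)"

definition EXPi :: "(nat \<Rightarrow> nat \<Rightarrow> real) \<Rightarrow> nat \<Rightarrow> nat \<Rightarrow> complex" where
  "EXPi R = (\<lambda>j k. exp (\<i> * complex_of_real (R j k)))"

definition list_mat :: "'a list list \<Rightarrow> nat \<Rightarrow> nat \<Rightarrow> 'a" where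
  "list_mat L = (\<lambda>j k. L ! (j - 1) ! (k - 1))"

definition D10 :: "nat \<Rightarrow> nat \<Rightarrow> complex" where
  "D10 = list_mat
    [[1,  1,  1,  1,  1,  1,  1,  1,  1,  1],
     [1, -1, -\<i>, -\<i>, -\<i>, -\<i>,  \<i>,  \<i>,  \<i>,  \<i>],
     [1, -\<i>, -1,  \<i>,  \<i>, -\<i>, -\<i>, -\<i>,  \<i>,  \<i>],
     [1, -\<i>,  \<i>, -1, -\<i>,  \<i>, -\<i>,  \<i>, -\<i>,  \<i>],
     [1, -\<i>,  \<i>, -\<i>, -1,  \<i>,  \<i>, -\<i>,  \<i>, -\<i>],
     [1, -\<i>, -\<i>,  \<i>,  \<i>, -1,  \<i>,  \<i>, -\<i>, -\<i>],
     [1,  \<i>, -\<i>, -\<i>,  \<i>,  \<i>, -1, -\<i>, -\<i>,  \<i>],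
     [1,  \<i>, -\<i>,  \<i>, -\<i>,  \<i>, -\<i>, -1,  \<i>, -\<i>],
     [1,  \<i>,  \<i>, -\<i>,  \<i>, -\<i>, -\<i>,  \<i>, -1, -\<i>],
     [1,  \<i>,  \<i>,  \<i>, -\<i>, -\<i>,  \<i>, -\<i>, -\<i>, -1]]"

definition pm_mat :: "(nat \<times> nat) list \<Rightarrow> (nat \<times> nat) list \<Rightarrow> nat \<Rightarrow> nat \<Rightarrow> real" where
  "pm_mat P N = (\<lambda>j k. if (j, k) \<in> set P then 1 else if (j, k) \<in> set N then -1 else 0)"

definition V4 :: "nat \<Rightarrow> nat \<Rightarrow> real" where
  "V4 = pm_mat [(2,5),(2,9),(4,7),(4,8),(6,5),(6,9),(10,7),(10,8)]
               [(5,2),(5,6),(7,4),(7,10),(8,4),(8,10),(9,2),(9,6)]"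

definition V15 :: "nat \<Rightarrow> nat \<Rightarrow> real" where
  "V15 = pm_mat [(4,2),(4,6),(5,2),(5,6),(9,2),(9,6),(10,2),(10,6)]
                [(2,4),(2,5),(2,9),(2,10),(6,4),(6,5),(6,9),(6,10)]"

definition V16 :: "nat \<Rightarrow> nat \<Rightarrow> real" where
  "V16 = pm_mat [(4,2),(4,6),(7,5),(7,9),(8,5),(8,9),(10,2),(10,6)]
                [(2,4),(2,10),(5,7),(5,8),(6,4),(6,10),(9,7),(9,8)]"

end

theory Submission imports Defs begin

text \<open>Since the phases of \<open>EXP(i R)\<close> are unimodular, they cancel in the moduli and, when \<open>R\<close>
  vanishes on the first row and column, do not disturb the dephasing; only the orthogonality of
  distinct rows has to be checked, where row \<open>j\<close> against row \<open>k\<close> picks up the phase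
  \<open>R j l - R k l\<close>. For \<open>D10\<close> and \<open>R = a V4 + b V15 + c V16\<close> these phase differences are integer
  combinations of \<open>a, b, c\<close>, and in each of the 90 inner products the terms cancel in pairs
  for all \<open>a, b, c\<close>.\<close>

lemma hadamard_prod_EXPi_apply:
  "hadamard_prod D (EXPi R) j k = D j k * cis (R j k)"
  by (simp add: hadamard_prod_def EXPi_def cis_conv_exp mult.commute)

lemma hadamard_prod_EXPi_inner:
  "hadamard_prod D (EXPi R) j l * cnj (hadamard_prod D (EXPi R) k l)
     = D j l * cnj (D k l) * cis (R j l - R k l)"
proof -
  have "cis (R j l) * cis (- R k l) = cis (R j l - R k l)"
    by (simp add: cis_mult)
  then show ?thesis
    by (simp add: hadamard_prod_EXPi_apply cis_cnj ac_simps)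
qed

lemma dephased_complex_hadamard_hadamard_prod_EXPi:
  assumes unimodular: "\<forall>j\<in>{1..d}. \<forall>k\<in>{1..d}. cmod (D j k) = 1"
    and first_row: "\<forall>k\<in>{1..d}. D 1 k = 1 \<and> R 1 k = 0"
    and first_col: "\<forall>j\<in>{1..d}. D j 1 = 1 \<and> R j 1 = 0"
    and orthogonal: "\<forall>j\<in>{1..d}. \<forall>k\<in>{1..d}. j \<noteq> k \<longrightarrow>
                       (\<Sum>l=1..d. D j l * cnj (D k l) * cis (R j l - R k l)) = 0"
  shows "dephased_complex_hadamard d (hadamard_prod D (EXPi R))"
proof -
  have "(\<Sum>l=1..d. D j l * cnj (D j l)) = of_nat d" if "j \<in> {1..d}" for j
  proof -
    have "D j l * cnj (D j l) = 1" if "l \<in> {1..d}" for l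
      using unimodular \<open>j \<in> {1..d}\<close> that by (simp flip: complex_norm_square)
    then show ?thesis by simp
  qed
  then show ?thesis
    using assms unfolding dephased_complex_hadamard_def hadamard_prod_EXPi_inner
    by (simp add: hadamard_prod_EXPi_apply norm_mult)
qed

lemma atLeastAtMost_1_10_nat: "{1..10::nat} = {1, 2, 3, 4, 5, 6, 7, 8, 9, 10}"
  by (auto, presburger)

lemma D10_unimodular: "\<forall>j\<in>{1..10}. \<forall>k\<in>{1..10}. cmod (D10 j k) = 1"
  unfolding atLeastAtMost_1_10_nat by (simp add: D10_def list_mat_def)

lemma D10_first_row: "\<forall>k\<in>{1..10}. D10 1 k = 1"
  unfolding atLeastAtMost_1_10_nat by (simp add: D10_def list_mat_def)

lemma D10_first_col: "\<forall>j\<in>{1..10}. D10 j 1 = 1"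
  unfolding atLeastAtMost_1_10_nat by (simp add: D10_def list_mat_def)

lemma V4_V15_V16_first_row: "V4 1 k = 0" "V15 1 k = 0" "V16 1 k = 0"
  by (simp_all add: V4_def V15_def V16_def pm_mat_def)

lemma V4_V15_V16_first_col: "V4 j 1 = 0" "V15 j 1 = 0" "V16 j 1 = 0"
  by (simp_all add: V4_def V15_def V16_def pm_mat_def)

text \<open>Keeping the integer coefficients as separate arguments lets the simplifier evaluate them
  numerically and treat each phase as an atom, so the cancellation below is cheap.\<close>

definition cis3 :: "real \<Rightarrow> real \<Rightarrow> real \<Rightarrow> real \<Rightarrow> real \<Rightarrow> real \<Rightarrow> complex" where
  "cis3 a b c p q r = cis (a * p + b * q + c * r)"

lemma cis3_zero: "cis3 a b c 0 0 0 = 1"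
  by (simp add: cis3_def)

lemma D10_V_orthogonal:
  fixes a b c :: real
  defines "R \<equiv> \<lambda>j k. a * V4 j k + b * V15 j k + c * V16 j k"
  assumes "j \<in> {1..10}" "k \<in> {1..10}" "j \<noteq> k"
  shows "(\<Sum>l=1..10. D10 j l * cnj (D10 k l) * cis (R j l - R k l)) = 0"
proof -
  have "cis (R j l - R k l)
          = cis3 a b c (V4 j l - V4 k l) (V15 j l - V15 k l) (V16 j l - V16 k l)" for l
    by (simp add: R_def cis3_def algebra_simps)
  then show ?thesis
    using assms(2-) unfolding atLeastAtMost_1_10_nat insert_iff empty_iff
    by (elim disjE; simp add: D10_def list_mat_def V4_def V15_def V16_def pm_mat_def
                               cis3_zero algebra_simps)
qed

theorem mainTheorem5:
  fixes a b c :: real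
  shows "dephased_complex_hadamard 10
           (hadamard_prod D10 (EXPi (\<lambda>j k. a * V4 j k + b * V15 j k + c * V16 j k)))"
proof (rule dephased_complex_hadamard_hadamard_prod_EXPi)
  show "\<forall>k\<in>{1..10}. D10 1 k = 1 \<and> a * V4 1 k + b * V15 1 k + c * V16 1 k = 0"
    using D10_first_row V4_V15_V16_first_row by simp
  show "\<forall>j\<in>{1..10}. D10 j 1 = 1 \<and> a * V4 j 1 + b * V15 j 1 + c * V16 j 1 = 0"
    using D10_first_col V4_V15_V16_first_col by simp
qed (fact D10_unimodular, blast intro: D10_V_orthogonal)

end
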